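(* Let $\Gamma$ be a finite simple graph, let $g\in G(\Gamma)$ be non-split and cyclically reduced, and let $v_0\in\mathrm{supp}(g)$. Then there exist a $v_0$-conical element $p\in G(\Gamma)$ and elements $a,b\in G(\Gamma)$ such that $$g=apa^{-1}=b^{-1}pb,$$ where $g^k=ab$ holds and is a geodesic decomposition for some $0\le k\le |V(\Gamma)|-1$. In particular, if $n\ge|V(\Gamma)|$, then $g^n=ap^{n-k}b$ is a geodesic decomposition (i.e. $|g^n|=|a|+(n-k)|p|+|b|$).
   Context: $G(\Gamma)=\langle v\in V(\Gamma)\mid [v_i,v_j]=1 \text{ if } \{v_i,v_j\}\notin E(\Gamma)\rangle$. $|g|$ is word length with respect to $V(\Gamma)$; a reduced word is a shortest representative. $\mathrm{supp}(g)$ is the set of generators $v$ such that $v^{\pm1}$ appears in a reduced word for $g$. $g$ is non-split if $\mathrm{supp}(g)$ spans a connected subgraph of $\Gamma$. $g$ is cyclically reduced if it has minimal word length in its conjugacy class. A decomposition $g=g_1\cdots g_k$ is geodesic if $|g|=\sum|g_i|$. The set of starting generators $S(g)$ is the set of $v\in V(\Gamma)$ such that $g=v^{\epsilon}h$ is geodesic for some $\epsilon=\pm1$ and $h\in G(\Gamma)$. $g$ is $v_0$-conical if $S(g)=\{v_0\}$. *)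

theory Defs
  imports Main "HOL-Library.Cardinality"
begin

text \<open>Elements of G(Gamma) are represented by words over the generators.
  The vertex set of Gamma is the whole finite type 'v; E is the (symmetric,
  irreflexive) edge relation.  A letter (v, True) is v, (v, False) is v^-1.
  Generators commute iff they are NOT joined by an edge (paper's convention).\<close>

type_synonym 'v word = "('v \<times> bool) list"

definition inv_letter :: "'v \<times> bool \<Rightarrow> 'v \<times> bool" where
  "inv_letter x = (fst x, \<not> snd x)"

definition inv_word :: "'v word \<Rightarrow> 'v word" where
  "inv_word w = rev (map inv_letter w)"

definition pow_word :: "'v word \<Rightarrow> nat \<Rightarrow> 'v word" where
  "pow_word w n = concat (replicate n w)"

inductive raag_step :: "('v \<Rightarrow> 'v \<Rightarrow> bool) \<Rightarrow> 'v word \<Rightarrow> 'v word \<Rightarrow> bool"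
  for E where
  cancel: "raag_step E (u @ [x, inv_letter x] @ w) (u @ w)"
| insert: "raag_step E (u @ w) (u @ [x, inv_letter x] @ w)"
| commute: "\<not> E (fst x) (fst y) \<Longrightarrow> raag_step E (u @ [x, y] @ w) (u @ [y, x] @ w)"

definition geq :: "('v \<Rightarrow> 'v \<Rightarrow> bool) \<Rightarrow> 'v word \<Rightarrow> 'v word \<Rightarrow> bool" where
  "geq E w1 w2 = (raag_step E)\<^sup>*\<^sup>* w1 w2"

definition wlen :: "('v \<Rightarrow> 'v \<Rightarrow> bool) \<Rightarrow> 'v word \<Rightarrow> nat" where
  "wlen E g = (LEAST n. \<exists>w. geq E g w \<and> length w = n)"

definition reduced_word_for :: "('v \<Rightarrow> 'v \<Rightarrow> bool) \<Rightarrow> 'v word \<Rightarrow> 'v word \<Rightarrow> bool" where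
  "reduced_word_for E w g = (geq E w g \<and> length w = wlen E g)"

definition supp :: "('v \<Rightarrow> 'v \<Rightarrow> bool) \<Rightarrow> 'v word \<Rightarrow> 'v set" where
  "supp E g = {v. \<exists>w. reduced_word_for E w g \<and> v \<in> fst ` set w}"

definition connected_span :: "('v \<Rightarrow> 'v \<Rightarrow> bool) \<Rightarrow> 'v set \<Rightarrow> bool" where
  "connected_span E S =
     (\<forall>u\<in>S. \<forall>v\<in>S. (\<lambda>x y. E x y \<and> x \<in> S \<and> y \<in> S)\<^sup>*\<^sup>* u v)"

definition non_split :: "('v \<Rightarrow> 'v \<Rightarrow> bool) \<Rightarrow> 'v word \<Rightarrow> bool" where
  "non_split E g = connected_span E (supp E g)"

definition cyclically_reduced :: "('v \<Rightarrow> 'v \<Rightarrow> bool) \<Rightarrow> 'v word \<Rightarrow> bool" where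
  "cyclically_reduced E g = (\<forall>c. wlen E g \<le> wlen E (c @ g @ inv_word c))"

definition start_gens :: "('v \<Rightarrow> 'v \<Rightarrow> bool) \<Rightarrow> 'v word \<Rightarrow> 'v set" where
  "start_gens E g = {v. \<exists>\<epsilon> h. geq E g ((v, \<epsilon>) # h) \<and> wlen E g = 1 + wlen E h}"

definition conical :: "('v \<Rightarrow> 'v \<Rightarrow> bool) \<Rightarrow> 'v \<Rightarrow> 'v word \<Rightarrow> bool" where
  "conical E v0 p = (start_gens E p = {v0})"

end

theory Submission
  imports Defs
begin

text \<open>Geodesic words are recognised by the piling of Crisp, Godelle and Wiest: a word is
  geodesic iff no pile contains a bead directly followed by its inverse, and for a cyclically
  reduced geodesic word \<open>r\<close> this property passes to every power \<open>r\<^sup>n\<close>.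

  Let \<open>q\<close> be the first occurrence of \<open>v\<^sub>0\<close> in \<open>r\<close>. In \<open>r\<^sup>K\<^sup>+\<^sup>1\<close> a position depends on an earlier one
  if their letters do not commute, and a set of positions closed under dependency can be moved
  to the right. Each copy of \<open>r\<close> reaches at least one new vertex of the connected support, so
  once \<open>K + 1\<close> is at least the size of the support the descendants of \<open>q\<close> contain the whole last
  copy. Moving the descendants of \<open>q\<close>, and then those of its copy \<open>q + |r|\<close>, to the right gives
  \<open>r\<^sup>K\<^sup>+\<^sup>1 = a p b = r a b\<close> with \<open>r\<^sup>K = a b\<close>, all geodesic; hence \<open>r a = a p\<close> and \<open>p b = b r\<close>, and
  \<open>p\<close> is \<open>v\<^sub>0\<close>-conical because each of its letters depends on \<open>q\<close> through letters of \<open>p\<close>.\<close>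

lemma append_Cons_eq_Cons_append: "set xs \<subseteq> {c} \<Longrightarrow> xs @ c # ys = c # xs @ ys"
  by (induction xs) auto

lemma filter_eq_Cons_snocE:
  assumes "filter P xs = y # ys @ [z]"
  obtains u m w where "xs = u @ y # m @ z # w" and "\<forall>x\<in>set u. \<not> P x" and "\<forall>x\<in>set w. \<not> P x"
proof -
  obtain u rest where xs: "xs = u @ y # rest" and u: "\<forall>x\<in>set u. \<not> P x"
    and rest: "ys @ [z] = filter P rest"
    using assms unfolding filter_eq_Cons_iff by (elim exE conjE)
  have "filter P (rev rest) = z # rev ys"
    by (simp add: rev_filter[symmetric] flip: rest)
  then obtain w' m' where rev_rest: "rev rest = w' @ z # m'" and w': "\<forall>x\<in>set w'. \<not> P x"
    unfolding filter_eq_Cons_iff by (elim exE conjE)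
  have "rest = rev m' @ z # rev w'"
    using arg_cong[OF rev_rest, of rev] by simp
  with xs have "xs = u @ y # rev m' @ z # rev w'"
    by simp
  moreover have "\<forall>x\<in>set (rev w'). \<not> P x"
    using w' by simp
  ultimately show thesis
    using that u by blast
qed

lemma first_occurrence:
  assumes "v \<in> fst ` set xs"
  obtains q where "q < length xs" and "fst (xs ! q) = v" and "\<And>t. t < q \<Longrightarrow> fst (xs ! t) \<noteq> v"
proof -
  let ?P = "\<lambda>t. t < length xs \<and> fst (xs ! t) = v"
  obtain t where "?P t"
    using assms by (metis imageE in_set_conv_nth)
  define q where "q = (LEAST t. ?P t)"
  have "?P q"
    unfolding q_def using \<open>?P t\<close> by (rule LeastI)
  moreover have "\<not> ?P t" if "t < q" for t
    using not_less_Least[of t ?P] that unfolding q_def by blast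
  ultimately show thesis
    using that less_trans by blast
qed

lemma nths_cong: "(\<And>i. i < length xs \<Longrightarrow> i \<in> A \<longleftrightarrow> i \<in> B) \<Longrightarrow> nths xs A = nths xs B"
  unfolding nths_def by (intro arg_cong[where f="map fst"] filter_cong) (auto simp: set_zip)

lemma nths_eq_Nil:
  assumes "\<And>i. i < length xs \<Longrightarrow> i \<notin> A"
  shows "nths xs A = []"
proof -
  have "set (nths xs A) = {}"
    using assms by (auto simp: set_nths)
  then show ?thesis
    by simp
qed

lemma length_nths_split: "length (nths xs A) = length (nths xs (A - D)) + length (nths xs (A \<inter> D))"
proof -
  have "{i. i < length xs \<and> i \<in> A} = {i. i < length xs \<and> i \<in> A - D} \<union> {i. i < length xs \<and> i \<in> A \<inter> D}"
    by blast
  then show ?thesis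
    by (simp add: length_nths card_Un_disjoint disjoint_iff)
qed

lemma nths_eq_Cons_least:
  assumes "i \<in> P" and "i < length w" and "\<And>j. j \<in> P \<Longrightarrow> i \<le> j"
  shows "\<exists>rest. nths w P = w ! i # rest"
proof -
  have w: "w = take i w @ w ! i # drop (Suc i) w"
    using assms(2) by (simp add: id_take_nth_drop)
  have "nths (take i w) P = []"
    using assms(3) by (intro nths_eq_Nil) (fastforce simp: not_le[symmetric])
  then show ?thesis
    using assms(1,2) by (subst w) (simp add: nths_append nths_Cons min_def)
qed

lemma nths_eq_append_Cons:
  assumes "nths w P = u @ y # u'"
  shows "\<exists>s\<in>P. s < length w \<and> w ! s = y \<and> (\<forall>j\<in>P. j < s \<longrightarrow> w ! j \<in> set u)"
  using assms
proof (induction w arbitrary: P u)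
  case Nil
  then show ?case by simp
next
  case (Cons x w)
  let ?P = "{j. Suc j \<in> P}"
  have shift: "\<exists>s\<in>P. s < length (x # w) \<and> (x # w) ! s = y \<and> (\<forall>j\<in>P. j < s \<longrightarrow> (x # w) ! j \<in> set u)"
    if tail: "nths w ?P = u0 @ y # u'" and head: "0 \<in> P \<Longrightarrow> x \<in> set u"
      and u0: "set u0 \<subseteq> set u" for u0
  proof -
    obtain s where s: "Suc s \<in> P" "s < length w" "w ! s = y" "\<forall>j\<in>?P. j < s \<longrightarrow> w ! j \<in> set u0"
      using Cons.IH[OF tail] by blast
    have "(x # w) ! j \<in> set u" if "j \<in> P" "j < Suc s" for j
      using s(4) that head u0 by (cases j) auto
    then show ?thesis
      using s by (intro bexI[of _ "Suc s"]) auto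
  qed
  show ?case
  proof (cases "0 \<in> P")
    case True
    then have xw: "x # nths w ?P = u @ y # u'"
      using Cons.prems by (simp add: nths_Cons)
    show ?thesis
    proof (cases u)
      case Nil
      then show ?thesis
        using xw True by (intro bexI[of _ 0]) auto
    next
      case (Cons u0 us)
      then show ?thesis
        using xw shift[of us] by auto
    qed
  next
    case False
    then show ?thesis
      using Cons.prems shift[of u] by (simp add: nths_Cons)
  qed
qed

lemma inv_letter_inv_letter [simp]: "inv_letter (inv_letter x) = x"
  by (cases x) (simp add: inv_letter_def)

lemma fst_inv_letter [simp]: "fst (inv_letter x) = fst x"
  by (simp add: inv_letter_def)

lemma snd_inv_letter [simp]: "snd (inv_letter x) = (\<not> snd x)"
  by (simp add: inv_letter_def)

lemma inv_word_Nil [simp]: "inv_word [] = []"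
  by (simp add: inv_word_def)

lemma inv_word_Cons [simp]: "inv_word (x # w) = inv_word w @ [inv_letter x]"
  by (simp add: inv_word_def)

lemma pow_word_0 [simp]: "pow_word w 0 = []"
  by (simp add: pow_word_def)

lemma pow_word_Suc: "pow_word w (Suc n) = w @ pow_word w n"
  by (simp add: pow_word_def)

lemma pow_word_add: "pow_word w (m + n) = pow_word w m @ pow_word w n"
  by (simp add: pow_word_def replicate_add)

lemma pow_word_Suc_right: "pow_word w (Suc n) = pow_word w n @ w"
  using pow_word_add[of w n 1] by (simp add: pow_word_def)

lemma length_pow_word [simp]: "length (pow_word w n) = n * length w"
  by (induction n) (simp_all add: pow_word_Suc)

lemma nth_pow_word:
  assumes "c < n" and "t < length w"
  shows "pow_word w n ! (c * length w + t) = w ! t"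
proof -
  have "pow_word w n = pow_word w c @ w @ pow_word w (n - Suc c)"
    using assms(1) pow_word_add[of w c "Suc (n - Suc c)"] by (simp add: pow_word_Suc)
  then show ?thesis
    using assms(2) by (simp add: nth_append)
qed

section \<open>Equality and length in the group\<close>

locale raag =
  fixes E :: "'v \<Rightarrow> 'v \<Rightarrow> bool"
  assumes E_sym: "E x y \<Longrightarrow> E y x"
begin

lemma raag_step_sym: "raag_step E u w \<Longrightarrow> raag_step E w u"
proof (induction rule: raag_step.induct)
  case (cancel u x w)
  show ?case by (rule raag_step.insert)
next
  case (insert u w x)
  show ?case by (rule raag_step.cancel)
next
  case (commute x y u w)
  then show ?case using raag_step.commute[of E y x u w] E_sym by blast
qed

lemma raag_step_context: "raag_step E u w \<Longrightarrow> raag_step E (X @ u @ Y) (X @ w @ Y)"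
proof (induction rule: raag_step.induct)
  case (cancel u x w)
  show ?case using raag_step.cancel[of E "X @ u" x "w @ Y"] by simp
next
  case (insert u w x)
  show ?case using raag_step.insert[of E "X @ u" "w @ Y" x] by simp
next
  case (commute x y u w)
  then show ?case using raag_step.commute[of E x y "X @ u" "w @ Y"] by simp
qed

lemma geq_refl [simp]: "geq E w w"
  by (simp add: geq_def)

lemma geq_trans [trans]: "geq E u v \<Longrightarrow> geq E v w \<Longrightarrow> geq E u w"
  unfolding geq_def by (rule rtranclp_trans)

lemma geq_sym: "geq E u w \<Longrightarrow> geq E w u"
  unfolding geq_def
  by (induction rule: rtranclp_induct) (auto intro: converse_rtranclp_into_rtranclp raag_step_sym)

lemma geq_context: "geq E u w \<Longrightarrow> geq E (X @ u @ Y) (X @ w @ Y)"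
  unfolding geq_def
  by (induction rule: rtranclp_induct) (auto intro: rtranclp.rtrancl_into_rtrancl raag_step_context)

lemma geq_append: "geq E u u' \<Longrightarrow> geq E w w' \<Longrightarrow> geq E (u @ w) (u' @ w')"
  using geq_context[of u u' "[]" w] geq_context[of w w' u' "[]"] by (auto intro: geq_trans)

lemma geq_Cons: "geq E u w \<Longrightarrow> geq E (x # u) (x # w)"
  using geq_context[of u w "[x]" "[]"] by simp

lemma geq_cancel: "geq E (X @ [x, inv_letter x] @ Y) (X @ Y)"
  unfolding geq_def by (rule r_into_rtranclp) (rule raag_step.cancel)

lemma geq_append_inv_word: "geq E (w @ inv_word w) []"
proof (induction w)
  case Nil
  show ?case by simp
next
  case (Cons x w)
  have "geq E ([x] @ (w @ inv_word w) @ [inv_letter x]) ([x] @ [] @ [inv_letter x])"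
    using Cons.IH by (rule geq_context)
  then show ?case
    using geq_cancel[of "[]" x "[]"] by (auto intro: geq_trans)
qed

lemma geq_inv_word_append: "geq E (inv_word w @ w) []"
proof (induction w)
  case Nil
  show ?case by simp
next
  case (Cons x w)
  have "geq E (inv_word w @ [inv_letter x, inv_letter (inv_letter x)] @ w) (inv_word w @ w)"
    by (rule geq_cancel)
  then show ?case using Cons.IH by (auto intro: geq_trans)
qed

lemma geq_cancel_left: "geq E (X @ u) (X @ w) \<Longrightarrow> geq E u w"
  using geq_context[of "X @ u" "X @ w" "inv_word X" "[]"]
    geq_context[OF geq_inv_word_append, of "[]" X u]
    geq_context[OF geq_inv_word_append, of "[]" X w]
  by (auto intro: geq_trans geq_sym)

lemma geq_cancel_right: "geq E (u @ X) (w @ X) \<Longrightarrow> geq E u w"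
  using geq_context[of "u @ X" "w @ X" "[]" "inv_word X"]
    geq_context[OF geq_append_inv_word, of u X "[]"]
    geq_context[OF geq_append_inv_word, of w X "[]"]
  by (auto intro: geq_trans geq_sym)

lemma geq_move_left:
  "(\<forall>z\<in>set M. \<not> E (fst z) (fst y)) \<Longrightarrow> geq E (X @ M @ y # Y) (X @ y # M @ Y)"
proof (induction M arbitrary: X)
  case Nil
  show ?case by simp
next
  case (Cons z M)
  have "geq E ((X @ [z]) @ M @ y # Y) ((X @ [z]) @ y # M @ Y)"
    using Cons.prems by (intro Cons.IH) simp
  moreover have "raag_step E (X @ [z, y] @ M @ Y) (X @ [y, z] @ M @ Y)"
    using Cons.prems by (intro raag_step.commute) simp
  then have "geq E (X @ [z, y] @ M @ Y) (X @ [y, z] @ M @ Y)"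
    by (simp add: geq_def)
  ultimately show ?case
    by (auto intro: geq_trans)
qed

lemma geq_conjugate_right: "geq E (x @ a) (a @ y) \<Longrightarrow> geq E x (a @ y @ inv_word a)"
  using geq_context[of "x @ a" "a @ y" "[]" "inv_word a"] geq_context[OF geq_append_inv_word, of x a "[]"]
  by (auto intro: geq_trans geq_sym)

lemma geq_conjugate_left: "geq E (y @ b) (b @ x) \<Longrightarrow> geq E x (inv_word b @ y @ b)"
  using geq_context[of "y @ b" "b @ x" "inv_word b" "[]"] geq_context[OF geq_inv_word_append, of "[]" b x]
  by (auto intro: geq_trans geq_sym)

lemma geq_conjugate_pow_word: "geq E (x @ a) (a @ y) \<Longrightarrow> geq E (pow_word x m @ a) (a @ pow_word y m)"
proof (induction m)
  case 0
  show ?case by simp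
next
  case (Suc m)
  have "geq E (x @ pow_word x m @ a) (x @ a @ pow_word y m)"
    using geq_context[OF Suc.IH[OF Suc.prems], of x "[]"] by simp
  also have "geq E \<dots> (a @ y @ pow_word y m)"
    using geq_context[OF Suc.prems, of "[]" "pow_word y m"] by simp
  finally show ?case
    by (simp add: pow_word_Suc)
qed

lemma geq_pow_word: "geq E g r \<Longrightarrow> geq E (pow_word g n) (pow_word r n)"
  by (induction n) (simp_all add: pow_word_Suc geq_append)

lemma geq_pow_word_conjugate_split:
  assumes "geq E (r @ a) (a @ p)" and "geq E (pow_word r K) (a @ b)" and "K \<le> n"
  shows "geq E (pow_word r n) (a @ pow_word p (n - K) @ b)"
proof -
  have "pow_word r n = pow_word r (n - K) @ pow_word r K"
    using assms(3) pow_word_add[of r "n - K" K] by simp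
  also have "geq E \<dots> (pow_word r (n - K) @ a @ b)"
    using geq_append[OF geq_refl assms(2)] .
  also have "geq E \<dots> (a @ pow_word p (n - K) @ b)"
    using geq_append[OF geq_conjugate_pow_word[OF assms(1)] geq_refl[of b]] by simp
  finally show ?thesis .
qed

lemma wlen_le: "geq E g w \<Longrightarrow> wlen E g \<le> length w"
  unfolding wlen_def by (rule Least_le) blast

lemma wlen_le_length: "wlen E w \<le> length w"
  by (rule wlen_le) simp

lemma geodesic_exists: "\<exists>w. geq E g w \<and> length w = wlen E g"
  unfolding wlen_def by (rule LeastI_ex) (use geq_refl in blast)

lemma wlen_cong: "geq E g h \<Longrightarrow> wlen E g = wlen E h"
  using geodesic_exists[of g] geodesic_exists[of h] wlen_le[of g] wlen_le[of h]
  by (metis geq_sym geq_trans le_antisym)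

lemma wlen_Cons_le: "wlen E (x # w) \<le> Suc (wlen E w)"
  using geodesic_exists[of w] wlen_le[OF geq_Cons, of w _ x] by fastforce

lemma cyclically_reduced_cong:
  assumes "geq E g h"
  shows "cyclically_reduced E g \<longleftrightarrow> cyclically_reduced E h"
proof -
  have "wlen E (c @ g @ inv_word c) = wlen E (c @ h @ inv_word c)" for c
    using geq_context[OF assms] by (rule wlen_cong)
  then show ?thesis
    using wlen_cong[OF assms] by (simp add: cyclically_reduced_def)
qed

end

section \<open>Piles and geodesic words\<close>

text \<open>On the pile of a vertex \<open>v\<close>, \<open>Bd True\<close> and \<open>Bd False\<close> stand for the letters \<open>v\<close> and
  \<open>v\<^sup>-\<^sup>1\<close>, and \<open>Sep\<close> for a letter that does not commute with \<open>v\<close>.\<close>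

datatype bead = Bd bool | Sep

fun pile_reduced :: "bead list \<Rightarrow> bool" where
  "pile_reduced (Bd a # Bd b # l) = (a = b \<and> pile_reduced (Bd b # l))"
| "pile_reduced (_ # l) = pile_reduced l"
| "pile_reduced [] = True"

lemma pile_reduced_Cons:
  "pile_reduced (x # l) \<longleftrightarrow> pile_reduced l \<and> (\<forall>a. x = Bd a \<longrightarrow> l = [] \<or> hd l \<noteq> Bd (\<not> a))"
  by (cases x; cases l; (cases "hd l")?; auto)

lemma pile_reduced_append:
  "pile_reduced (xs @ ys) \<longleftrightarrow> pile_reduced xs \<and> pile_reduced ys \<and>
     \<not> (xs \<noteq> [] \<and> ys \<noteq> [] \<and> (\<exists>a. last xs = Bd a \<and> hd ys = Bd (\<not> a)))"
  by (induction xs) (auto simp: pile_reduced_Cons)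

lemma pile_reduced_concat_replicate:
  assumes "pile_reduced (l @ l)"
  shows "pile_reduced (concat (replicate n l))"
proof (induction n)
  case 0
  show ?case by simp
next
  case (Suc n)
  have "pile_reduced l"
    using assms pile_reduced_append by blast
  moreover have "n \<noteq> 0 \<Longrightarrow> l \<noteq> [] \<Longrightarrow> hd (concat (replicate n l)) = hd l"
    by (cases n) simp_all
  ultimately show ?case
    using Suc.IH assms by (cases "n = 0 \<or> l = []") (auto simp: pile_reduced_append)
qed

context raag
begin

definition interacts :: "'v \<Rightarrow> 'v \<times> bool \<Rightarrow> bool" where
  "interacts v y \<longleftrightarrow> fst y = v \<or> E v (fst y)"

definition bead_of :: "'v \<Rightarrow> 'v \<times> bool \<Rightarrow> bead" where
  "bead_of v y = (if fst y = v then Bd (snd y) else Sep)"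

definition pile :: "'v word \<Rightarrow> 'v \<Rightarrow> bead list" where
  "pile w v = map (bead_of v) (filter (interacts v) w)"

definition reduced :: "'v word \<Rightarrow> bool" where
  "reduced w \<longleftrightarrow> (\<forall>v. pile_reduced (pile w v))"

definition cancels :: "'v \<times> bool \<Rightarrow> ('v \<Rightarrow> bead list) \<Rightarrow> bool" where
  "cancels x \<pi> \<longleftrightarrow> \<pi> (fst x) \<noteq> [] \<and> hd (\<pi> (fst x)) = Bd (\<not> snd x)"

text \<open>The action of left multiplication by a letter on pile vectors.\<close>

definition pile_act :: "'v \<times> bool \<Rightarrow> ('v \<Rightarrow> bead list) \<Rightarrow> 'v \<Rightarrow> bead list" where
  "pile_act x \<pi> v =
     (if interacts v x then if cancels x \<pi> then tl (\<pi> v) else bead_of v x # \<pi> v else \<pi> v)"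

definition piling :: "'v word \<Rightarrow> 'v \<Rightarrow> bead list" where
  "piling w = foldr pile_act w (\<lambda>_. [])"

lemma pile_Nil [simp]: "pile [] = (\<lambda>_. [])"
  by (simp add: pile_def fun_eq_iff)

lemma pile_Cons: "pile (x # w) v = (if interacts v x then bead_of v x # pile w v else pile w v)"
  by (simp add: pile_def)

lemma pile_append: "pile (u @ w) v = pile u v @ pile w v"
  by (simp add: pile_def)

lemma pile_pow_word: "pile (pow_word r n) v = concat (replicate n (pile r v))"
  by (induction n) (simp_all add: pow_word_Suc pile_append)

lemma interacts_self [simp]: "interacts (fst x) x"
  by (simp add: interacts_def)

lemma interacts_inv_letter [simp]: "interacts v (inv_letter x) = interacts v x"
  by (simp add: interacts_def)

lemma bead_of_self [simp]: "bead_of (fst x) x = Bd (snd x)"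
  by (simp add: bead_of_def)

lemma not_interacts_commute: "\<not> interacts (fst x) z \<Longrightarrow> \<not> E (fst z) (fst x)"
  using E_sym by (auto simp: interacts_def)

lemma piling_Nil [simp]: "piling [] = (\<lambda>_. [])"
  by (simp add: piling_def)

lemma piling_Cons [simp]: "piling (x # w) = pile_act x (piling w)"
  by (simp add: piling_def)

lemma piling_append: "piling (u @ w) = foldr pile_act u (piling w)"
  by (simp add: piling_def)

lemma reduced_Nil [simp]: "reduced []"
  by (simp add: reduced_def)

lemma reduced_Cons: "reduced (x # w) \<longleftrightarrow> reduced w \<and> \<not> cancels x (pile w)"
  unfolding reduced_def cancels_def
  by (auto simp: pile_Cons pile_reduced_Cons bead_of_def interacts_def)

lemma reduced_appendD: "reduced (u @ w) \<Longrightarrow> reduced u \<and> reduced w"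
  unfolding reduced_def pile_append pile_reduced_append by simp

lemma reduced_cong_pile: "pile u = pile w \<Longrightarrow> reduced u \<longleftrightarrow> reduced w"
  by (simp add: reduced_def)

lemma pile_act_not_cancels: "\<not> cancels x (pile t) \<Longrightarrow> pile_act x (pile t) = pile (x # t)"
  by (auto simp: pile_act_def pile_Cons)

lemma pile_act_inv_letter_Cons: "pile_act x (pile (inv_letter x # t)) = pile t"
proof -
  have "cancels x (pile (inv_letter x # t))"
    by (simp add: cancels_def pile_Cons bead_of_def)
  then show ?thesis
    by (auto simp: pile_act_def pile_Cons)
qed

lemma pile_move_left:
  assumes "\<forall>z\<in>set u. \<not> interacts (fst x) z"
  shows "pile (u @ x # w) = pile (x # u @ w)"
proof
  fix v
  consider "v = fst x" | "v \<noteq> fst x" "E v (fst x)" | "\<not> interacts v x"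
    by (auto simp: interacts_def)
  then show "pile (u @ x # w) v = pile (x # u @ w) v"
  proof cases
    case 1
    then have "pile u v = []"
      using assms by (auto simp: pile_def filter_empty_conv)
    then show ?thesis
      using 1 by (simp add: pile_append pile_Cons)
  next
    case 2
    then have "set (pile u v) \<subseteq> {Sep}"
      using assms E_sym by (auto simp: pile_def bead_of_def interacts_def)
    then show ?thesis
      using 2 by (simp add: pile_append pile_Cons bead_of_def interacts_def append_Cons_eq_Cons_append)
  next
    case 3
    then show ?thesis
      by (simp add: pile_append pile_Cons)
  qed
qed

lemma cancelsE:
  assumes "cancels x (pile t)"
  obtains u w where "t = u @ inv_letter x # w" and "\<forall>z\<in>set u. \<not> interacts (fst x) z"
proof -
  obtain y ys where y: "filter (interacts (fst x)) t = y # ys"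
    using assms by (cases "filter (interacts (fst x)) t") (auto simp: cancels_def pile_def)
  then have "bead_of (fst x) y = Bd (\<not> snd x)"
    using assms by (simp add: cancels_def pile_def)
  then have "y = inv_letter x"
    by (simp add: bead_of_def inv_letter_def prod_eq_iff split: if_splits)
  moreover obtain u w where "t = u @ y # w" and "\<forall>z\<in>set u. \<not> interacts (fst x) z"
    using y unfolding filter_eq_Cons_iff by blast
  ultimately show thesis
    using that by blast
qed

lemma pile_act_reduced:
  assumes "reduced t"
  shows "\<exists>t'. reduced t' \<and> pile_act x (pile t) = pile t' \<and> geq E (x # t) t'
    \<and> (t' = x # t \<or> length t' < Suc (length t))"
proof (cases "cancels x (pile t)")
  case True
  then obtain u w where t: "t = u @ inv_letter x # w" and u: "\<forall>z\<in>set u. \<not> interacts (fst x) z"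
    by (rule cancelsE)
  have pile_t: "pile t = pile (inv_letter x # u @ w)"
    using pile_move_left[of u "inv_letter x" w] u t by simp
  then have "reduced (inv_letter x # u @ w)"
    using assms reduced_cong_pile by blast
  then have "reduced (u @ w)"
    by (simp add: reduced_Cons)
  moreover have "pile_act x (pile t) = pile (u @ w)"
    using pile_t pile_act_inv_letter_Cons by simp
  moreover have "geq E (x # t) (u @ w)"
  proof -
    have "geq E ([x] @ u @ inv_letter x # w) ([x] @ inv_letter x # u @ w)"
      using u not_interacts_commute by (intro geq_move_left) auto
    then show ?thesis
      using t geq_cancel[of "[]" x "u @ w"] by (auto intro: geq_trans)
  qed
  ultimately show ?thesis
    using t by (intro exI[of _ "u @ w"]) simp
next
  case False
  then have "reduced (x # t)"
    using assms by (simp add: reduced_Cons)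
  then show ?thesis
    using pile_act_not_cancels[OF False] by (intro exI[of _ "x # t"]) simp
qed

lemma piling_reduces:
  "\<exists>t. reduced t \<and> piling w = pile t \<and> geq E w t \<and> (t = w \<or> length t < length w)"
proof (induction w)
  case Nil
  show ?case by (intro exI[of _ "[]"]) simp
next
  case (Cons x w)
  then obtain t where t: "reduced t" "piling w = pile t" "geq E w t" "t = w \<or> length t < length w"
    by blast
  obtain t' where t': "reduced t'" "pile_act x (pile t) = pile t'" "geq E (x # t) t'"
    "t' = x # t \<or> length t' < Suc (length t)"
    using pile_act_reduced[OF t(1)] by blast
  have "geq E (x # w) t'"
    using geq_Cons[OF t(3)] t'(3) by (rule geq_trans)
  moreover have "t' = x # w \<or> length t' < length (x # w)"
    using t(4) t'(4) by auto
  ultimately show ?case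
    using t t' by (intro exI[of _ t']) simp
qed

lemma pile_act_inverse:
  assumes "reduced t"
  shows "pile_act x (pile_act (inv_letter x) (pile t)) = pile t"
proof (cases "cancels (inv_letter x) (pile t)")
  case True
  obtain u w where t: "t = u @ x # w" and u: "\<forall>z\<in>set u. \<not> interacts (fst x) z"
    using cancelsE[OF True] by (metis fst_inv_letter inv_letter_inv_letter)
  have pile_t: "pile t = pile (x # u @ w)"
    using pile_move_left[OF u] t by simp
  then have "reduced (x # u @ w)"
    using assms reduced_cong_pile by blast
  then have "\<not> cancels x (pile (u @ w))"
    by (simp add: reduced_Cons)
  then show ?thesis
    using pile_t pile_act_inv_letter_Cons[of "inv_letter x"] pile_act_not_cancels by simp
next
  case False
  then show ?thesis
    using pile_act_not_cancels pile_act_inv_letter_Cons[of x t] by simp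
qed

lemma cancels_Sep:
  assumes "cancels x (pile t)" and "interacts v x" and "v \<noteq> fst x"
  shows "Sep # tl (pile t v) = pile t v"
proof -
  obtain u w where t: "t = u @ inv_letter x # w" and u: "\<forall>z\<in>set u. \<not> interacts (fst x) z"
    using assms(1) by (rule cancelsE)
  have "pile t = pile (inv_letter x # u @ w)"
    using pile_move_left[of u "inv_letter x" w] u t by simp
  then show ?thesis
    using assms(2,3) by (simp add: pile_Cons bead_of_def)
qed

lemma pile_act_commute:
  assumes "reduced t" and "\<not> E (fst x) (fst y)"
  shows "pile_act x (pile_act y (pile t)) = pile_act y (pile_act x (pile t))"
proof (cases "fst x = fst y")
  case True
  then have "y = x \<or> y = inv_letter x"
    by (cases x; cases y) (auto simp: inv_letter_def)
  then show ?thesis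
    using pile_act_inverse[OF assms(1), of x] pile_act_inverse[OF assms(1), of "inv_letter x"]
    by auto
next
  case False
  let ?p = "pile t"
  have xy: "\<not> interacts (fst x) y" and yx: "\<not> interacts (fst y) x"
    using False assms(2) E_sym by (auto simp: interacts_def)
  then have cx: "cancels x (pile_act y ?p) = cancels x ?p"
    and cy: "cancels y (pile_act x ?p) = cancels y ?p"
    by (simp_all add: pile_act_def cancels_def)
  show ?thesis
  proof
    fix v
    have "interacts v x \<Longrightarrow> interacts v y \<Longrightarrow> bead_of v x = Sep \<and> bead_of v y = Sep"
      using xy yx by (auto simp: bead_of_def)
    moreover have "cancels x ?p \<Longrightarrow> interacts v x \<Longrightarrow> interacts v y \<Longrightarrow> Sep # tl (?p v) = ?p v"
      using cancels_Sep[of x t v] xy by auto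
    moreover have "cancels y ?p \<Longrightarrow> interacts v x \<Longrightarrow> interacts v y \<Longrightarrow> Sep # tl (?p v) = ?p v"
      using cancels_Sep[of y t v] yx by auto
    ultimately show "pile_act x (pile_act y ?p) v = pile_act y (pile_act x ?p) v"
      by (cases "cancels x ?p"; cases "cancels y ?p"; cases "interacts v x"; cases "interacts v y")
        (simp_all add: pile_act_def cx cy)
  qed
qed

lemma pile_act_inverse_piling: "pile_act x (pile_act (inv_letter x) (piling w)) = piling w"
proof -
  obtain t where "reduced t" and "piling w = pile t"
    using piling_reduces by blast
  then show ?thesis
    using pile_act_inverse[of t x] by simp
qed

lemma piling_raag_step: "raag_step E u w \<Longrightarrow> piling u = piling w"
proof (induction rule: raag_step.induct)
  case (cancel u x w)
  show ?case
    by (simp add: piling_append pile_act_inverse_piling)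
next
  case (insert u w x)
  show ?case
    by (simp add: piling_append pile_act_inverse_piling)
next
  case (commute x y u w)
  obtain t where "reduced t" and "piling w = pile t"
    using piling_reduces by blast
  then show ?case
    using pile_act_commute[of t x y] commute by (simp add: piling_append)
qed

lemma piling_geq: "geq E u w \<Longrightarrow> piling u = piling w"
  unfolding geq_def by (induction rule: rtranclp_induct) (auto dest: piling_raag_step)

lemma piling_reduced: "reduced w \<Longrightarrow> piling w = pile w"
  by (induction w) (simp_all add: reduced_Cons pile_act_not_cancels)

lemma letters_eq_pile: "fst ` set w = {v. \<exists>\<epsilon>. Bd \<epsilon> \<in> set (pile w v)}"
proof -
  have "Bd \<epsilon> \<in> set (pile w v) \<longleftrightarrow> (v, \<epsilon>) \<in> set w" for v \<epsilon>
    by (force simp: pile_def bead_of_def interacts_def)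
  then show ?thesis
    by force
qed

lemma length_eq_sum_letters:
  assumes "finite V" and "fst ` set w \<subseteq> V"
  shows "length w = (\<Sum>v\<in>V. length (filter (\<lambda>y. fst y = v) w))"
  using assms(2)
proof (induction w)
  case Nil
  show ?case by simp
next
  case (Cons x w)
  have "(\<Sum>v\<in>V. length (filter (\<lambda>y. fst y = v) (x # w)))
      = (\<Sum>v\<in>V. (if v = fst x then 1 else 0) + length (filter (\<lambda>y. fst y = v) w))"
    by (rule sum.cong) auto
  also have "\<dots> = 1 + length w"
    using Cons assms(1) by (simp add: sum.distrib)
  finally show ?case by simp
qed

lemma length_eq_if_pile_eq:
  assumes "pile u = pile w"
  shows "length u = length w"
proof -
  have count: "length (filter (\<lambda>y. fst y = v) t) = length (filter (\<lambda>b. b \<noteq> Sep) (pile t v))"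
    for t v
  proof -
    have "filter (\<lambda>b. b \<noteq> Sep) (pile t v) = map (bead_of v) (filter (\<lambda>y. fst y = v) t)"
      unfolding pile_def filter_map filter_filter
      by (rule arg_cong[where f="map (bead_of v)"], rule filter_cong)
        (auto simp: bead_of_def interacts_def)
    then show ?thesis by simp
  qed
  have "fst ` set u = fst ` set w"
    using letters_eq_pile[of u] letters_eq_pile[of w] assms by simp
  then show ?thesis
    using length_eq_sum_letters[of "fst ` set u" u] length_eq_sum_letters[of "fst ` set w" w]
    by (simp add: count assms)
qed

lemma pile_eq_if_geq: "reduced u \<Longrightarrow> reduced w \<Longrightarrow> geq E u w \<Longrightarrow> pile u = pile w"
  using piling_reduced[of u] piling_reduced[of w] piling_geq[of u w] by simp

lemma reduced_length_le:
  assumes "reduced r" and "geq E r w"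
  shows "length r \<le> length w"
proof -
  obtain t where t: "reduced t" "piling w = pile t" "t = w \<or> length t < length w"
    using piling_reduces by blast
  have "pile r = pile t"
    using piling_reduced[OF assms(1)] piling_geq[OF assms(2)] t(2) by simp
  then have "length r = length t"
    by (rule length_eq_if_pile_eq)
  then show ?thesis
    using t(3) by auto
qed

lemma reduced_iff_geodesic: "reduced w \<longleftrightarrow> wlen E w = length w"
proof
  assume "reduced w"
  obtain w' where "geq E w w'" and "length w' = wlen E w"
    using geodesic_exists by blast
  then have "length w \<le> wlen E w"
    using reduced_length_le[OF \<open>reduced w\<close> \<open>geq E w w'\<close>] by simp
  then show "wlen E w = length w"
    using wlen_le_length[of w] by simp
next
  assume geodesic: "wlen E w = length w"
  obtain t where t: "reduced t" "geq E w t" "t = w \<or> length t < length w"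
    using piling_reduces by blast
  have "length w \<le> length t"
    using wlen_le[OF t(2)] geodesic by simp
  then show "reduced w"
    using t by auto
qed

lemma reduced_word_exists: "\<exists>r. reduced r \<and> geq E g r \<and> length r = wlen E g"
proof -
  obtain r where "reduced r" and "geq E g r"
    using piling_reduces by blast
  moreover from this have "length r = wlen E g"
    using reduced_iff_geodesic wlen_cong by simp
  ultimately show ?thesis
    by blast
qed

lemma reduced_if_geq_same_length:
  assumes "reduced w" and "geq E w u" and "length u = length w"
  shows "reduced u"
  using wlen_cong[OF assms(2)] assms(1,3) by (simp add: reduced_iff_geodesic)

lemma supp_eq_letters:
  assumes "reduced r" and "geq E g r"
  shows "supp E g = fst ` set r"
proof
  show "supp E g \<subseteq> fst ` set r"
  proof
    fix v
    assume "v \<in> supp E g"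
    then obtain w where w: "reduced_word_for E w g" and "v \<in> fst ` set w"
      by (auto simp: supp_def)
    from w have "geq E w r" and "reduced w"
      using assms(2) geq_trans wlen_cong reduced_iff_geodesic
      by (auto simp: reduced_word_for_def)
    then have "pile w = pile r"
      using assms(1) pile_eq_if_geq by blast
    then show "v \<in> fst ` set r"
      using \<open>v \<in> fst ` set w\<close> letters_eq_pile by metis
  qed
next
  have "reduced_word_for E r g"
    using assms wlen_cong geq_sym reduced_iff_geodesic by (simp add: reduced_word_for_def)
  then show "fst ` set r \<subseteq> supp E g"
    by (auto simp: supp_def)
qed

lemma start_gens_reduced:
  assumes "reduced p"
  shows "v \<in> start_gens E p \<longleftrightarrow> (\<exists>u y w. p = u @ y # w \<and> fst y = v \<and> (\<forall>z\<in>set u. \<not> interacts v z))"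
proof
  assume "v \<in> start_gens E p"
  then obtain \<epsilon> h where h: "geq E p ((v, \<epsilon>) # h)" "wlen E p = 1 + wlen E h"
    by (auto simp: start_gens_def)
  obtain h' where h': "reduced h'" "geq E h h'" "length h' = wlen E h"
    using reduced_word_exists by blast
  have p_h': "geq E p ((v, \<epsilon>) # h')"
    using h(1) geq_Cons[OF h'(2)] by (rule geq_trans)
  then have "wlen E ((v, \<epsilon>) # h') = length ((v, \<epsilon>) # h')"
    using wlen_cong h(2) h'(3) by simp
  then have "pile p = pile ((v, \<epsilon>) # h')"
    using pile_eq_if_geq assms p_h' reduced_iff_geodesic by blast
  then have "pile p v = Bd \<epsilon> # pile h' v"
    by (simp add: pile_Cons bead_of_def interacts_def)
  then obtain y ys where y: "filter (interacts v) p = y # ys" and "bead_of v y = Bd \<epsilon>"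
    unfolding pile_def by (cases "filter (interacts v) p") auto
  then have "fst y = v"
    by (auto simp: bead_of_def split: if_splits)
  with y show "\<exists>u y w. p = u @ y # w \<and> fst y = v \<and> (\<forall>z\<in>set u. \<not> interacts v z)"
    unfolding filter_eq_Cons_iff by blast
next
  assume "\<exists>u y w. p = u @ y # w \<and> fst y = v \<and> (\<forall>z\<in>set u. \<not> interacts v z)"
  then obtain u y w where p: "p = u @ y # w" "fst y = v" "\<forall>z\<in>set u. \<not> interacts v z"
    by blast
  have "geq E ([] @ u @ y # w) ([] @ y # u @ w)"
    using p not_interacts_commute by (intro geq_move_left) auto
  then have p_yuw: "geq E p (y # u @ w)"
    using p by simp
  have "length p \<le> Suc (wlen E (u @ w))"
    using wlen_cong[OF p_yuw] wlen_Cons_le[of y "u @ w"] assms reduced_iff_geodesic by simp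
  then have "wlen E p = 1 + wlen E (u @ w)"
    using wlen_le_length[of "u @ w"] assms reduced_iff_geodesic p(1) by simp
  then show "v \<in> start_gens E p"
    unfolding start_gens_def using p_yuw p(2)
    by (intro CollectI exI[of _ "snd y"] exI[of _ "u @ w"]) (cases y, simp)
qed

lemma geq_conjugate_cancels:
  assumes "\<forall>z\<in>set u. \<not> interacts (fst y) z" and "\<forall>z\<in>set w. \<not> interacts (fst y) z"
  shows "geq E ([inv_letter y] @ (u @ y # m @ inv_letter y # w) @ inv_word [inv_letter y]) (u @ m @ w)"
proof -
  have u: "\<forall>z\<in>set u. \<not> E (fst z) (fst y)" and w: "\<forall>z\<in>set w. \<not> E (fst z) (fst y)"
    using assms not_interacts_commute by blast+
  have "geq E (inv_letter y # u @ y # m @ inv_letter y # w @ [y])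
      (inv_letter y # y # u @ m @ inv_letter y # w @ [y])"
    using geq_move_left[OF u, of "[inv_letter y]" "m @ inv_letter y # w @ [y]"] by simp
  also have "geq E \<dots> (u @ m @ inv_letter y # w @ [y])"
    using geq_cancel[of "[]" "inv_letter y" "u @ m @ inv_letter y # w @ [y]"] by simp
  also have "geq E \<dots> (u @ m @ inv_letter y # y # w)"
    using geq_move_left[OF w, of "u @ m @ [inv_letter y]" "[]"] by simp
  also have "geq E \<dots> (u @ m @ w)"
    using geq_cancel[of "u @ m" "inv_letter y" w] by simp
  finally show ?thesis
    by simp
qed

text \<open>Otherwise conjugating by \<open>v\<^sup>\<epsilon>\<close> would cancel the first and the last letter \<open>v\<^sup>\<plusminus>\<^sup>1\<close>.\<close>

lemma cyclically_reduced_pile_ends: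
  assumes "reduced r" and "cyclically_reduced E r" and "pile r v \<noteq> []"
  shows "\<not> (last (pile r v) = Bd a \<and> hd (pile r v) = Bd (\<not> a))"
proof
  assume ends: "last (pile r v) = Bd a \<and> hd (pile r v) = Bd (\<not> a)"
  obtain y rest where F: "filter (interacts v) r = y # rest"
    using assms(3) by (cases "filter (interacts v) r") (auto simp: pile_def)
  then have "bead_of v y = Bd (\<not> a)"
    using ends by (simp add: pile_def)
  then have y: "y = (v, \<not> a)"
    by (simp add: bead_of_def prod_eq_iff split: if_splits)
  have "rest \<noteq> []"
    using ends F y by (auto simp: pile_def)
  then obtain ys z where rest: "rest = ys @ [z]"
    by (cases rest rule: rev_cases) auto
  then have "bead_of v z = Bd a"
    using ends F by (simp add: pile_def)
  then have z: "z = inv_letter y"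
    using y by (simp add: bead_of_def inv_letter_def prod_eq_iff split: if_splits)
  obtain u m w where r: "r = u @ y # m @ z # w"
    and "\<forall>x\<in>set u. \<not> interacts (fst y) x" and "\<forall>x\<in>set w. \<not> interacts (fst y) x"
    using F rest y by (auto elim: filter_eq_Cons_snocE)
  then have "wlen E ([inv_letter y] @ r @ inv_word [inv_letter y]) \<le> length (u @ m @ w)"
    using z geq_conjugate_cancels wlen_le by blast
  also have "\<dots> < wlen E r"
    using r assms(1) reduced_iff_geodesic by simp
  finally show False
    using assms(2) unfolding cyclically_reduced_def by (metis not_le)
qed

lemma reduced_pow_word:
  assumes "reduced r" and "cyclically_reduced E r"
  shows "reduced (pow_word r n)"
  unfolding reduced_def pile_pow_word
proof
  fix v
  show "pile_reduced (concat (replicate n (pile r v)))"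
    using assms cyclically_reduced_pile_ends[OF assms, of v]
    by (intro pile_reduced_concat_replicate) (auto simp: reduced_def pile_reduced_append)
qed

lemma wlen_pow_word:
  assumes "cyclically_reduced E g"
  shows "wlen E (pow_word g n) = n * wlen E g"
proof -
  obtain r where r: "reduced r" "geq E g r" "length r = wlen E g"
    using reduced_word_exists by blast
  then have "reduced (pow_word r n)"
    using assms cyclically_reduced_cong reduced_pow_word by blast
  then show ?thesis
    using wlen_cong[OF geq_pow_word[OF r(2)]] r(3) reduced_iff_geodesic by simp
qed

end

section \<open>Connected sets of vertices\<close>

lemma connected_span_edge_leaving:
  assumes "connected_span E S" and "H \<noteq> {}" and "H \<subseteq> S" and "H \<noteq> S"
  shows "\<exists>w\<in>H. \<exists>w'\<in>S - H. E w w'"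
proof -
  obtain v z where "v \<in> H" and z: "z \<in> S" "z \<notin> H"
    using assms(2-4) by blast
  then have "(\<lambda>x y. E x y \<and> x \<in> S \<and> y \<in> S)\<^sup>*\<^sup>* v z"
    using assms(1,3) unfolding connected_span_def by blast
  then have "z \<notin> H \<longrightarrow> (\<exists>w\<in>H. \<exists>w'\<in>S - H. E w w')"
    by (induction rule: rtranclp_induct) (use \<open>v \<in> H\<close> in blast)+
  then show ?thesis
    using z by blast
qed

lemma connected_span_grows:
  assumes "connected_span E S" and "finite S" and "H \<noteq> {}" and "H \<subset> S" and "H \<subseteq> H'" and "H' \<subseteq> S"
    and "\<And>w w'. w \<in> H \<Longrightarrow> w' \<in> S \<Longrightarrow> E w w' \<Longrightarrow> w' \<in> H'"
  shows "card H < card H'"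
proof -
  obtain w w' where "w \<in> H" "w' \<in> S - H" "E w w'"
    using connected_span_edge_leaving[OF assms(1,3)] assms(4) by blast
  then have sub: "insert w' H \<subseteq> H'" and "w' \<notin> H"
    using assms(5,7) by blast+
  have "finite H'"
    using assms(2,6) finite_subset by blast
  then have "card (insert w' H) \<le> card H'"
    using sub by (rule card_mono)
  moreover have "card (insert w' H) = Suc (card H)"
    using \<open>w' \<notin> H\<close> finite_subset[OF assms(5) \<open>finite H'\<close>] by simp
  ultimately show ?thesis
    by simp
qed

lemma connected_span_exhausted:
  assumes conn: "connected_span E S" and "finite S" and "card S \<le> Suc K" and "H 0 \<noteq> {}"
    and sub: "\<And>c. H c \<subseteq> S" and mono: "\<And>c. c < K \<Longrightarrow> H c \<subseteq> H (Suc c)"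
    and grow: "\<And>c w w'. c < K \<Longrightarrow> w \<in> H c \<Longrightarrow> w' \<in> S \<Longrightarrow> E w w' \<Longrightarrow> w' \<in> H (Suc c)"
  shows "H K = S"
proof -
  have finite: "finite (H c)" for c
    using assms(2) sub finite_subset by blast
  have "min (Suc c) (card S) \<le> card (H c)" if "c \<le> K" for c
    using that
  proof (induction c)
    case 0
    have "0 < card (H 0)"
      using assms(4) finite[of 0] card_gt_0_iff by blast
    then show ?case
      by simp
  next
    case (Suc c)
    then have c: "c < K" and IH: "min (Suc c) (card S) \<le> card (H c)"
      by simp_all
    show ?case
    proof (cases "H c = S")
      case True
      then have "H (Suc c) = S"
        using sub[of "Suc c"] mono[OF c] by blast
      then show ?thesis
        by simp
    next
      case False
      have "0 < card S"
        using assms(2,4) sub[of 0] card_gt_0_iff by blast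
      with IH have nonempty: "H c \<noteq> {}"
        by (cases "Suc c \<le> card S") (auto simp: min_def)
      have "H c \<subset> S"
        using False sub[of c] by blast
      then have "card (H c) < card (H (Suc c))"
        by (rule connected_span_grows[OF conn assms(2) nonempty _ mono[OF c] sub grow[OF c]])
      then show ?thesis
        using IH by simp
    qed
  qed
  then have "card S \<le> card (H K)"
    using assms(3) by fastforce
  then show ?thesis
    using assms(2) sub card_seteq by blast
qed

section \<open>Dependencies between positions\<close>

context raag
begin

definition depends :: "'v word \<Rightarrow> nat \<Rightarrow> nat \<Rightarrow> bool" where
  "depends w i j \<longleftrightarrow> i < j \<and> j < length w \<and> interacts (fst (w ! i)) (w ! j)"

definition descendants :: "'v word \<Rightarrow> nat \<Rightarrow> nat set" where
  "descendants w i = {j. (depends w)\<^sup>*\<^sup>* i j}"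

lemma descendants_self [simp]: "i \<in> descendants w i"
  by (simp add: descendants_def)

lemma descendants_step: "j \<in> descendants w i \<Longrightarrow> depends w j k \<Longrightarrow> k \<in> descendants w i"
  by (simp add: descendants_def)

lemma descendants_trans: "j \<in> descendants w i \<Longrightarrow> k \<in> descendants w j \<Longrightarrow> k \<in> descendants w i"
  by (simp add: descendants_def)

lemma descendants_ge: "j \<in> descendants w i \<Longrightarrow> i \<le> j"
  unfolding descendants_def mem_Collect_eq by (induction rule: rtranclp_induct) (auto simp: depends_def)

lemma descendants_last_step:
  assumes "j \<in> descendants w i" and "j \<noteq> i"
  obtains k where "k \<in> descendants w i" and "depends w k j"
  using assms unfolding descendants_def mem_Collect_eq by (metis rtranclp.cases)

lemma descendants_append_shift:
  "j + length u \<in> descendants (u @ v) (i + length u) \<longleftrightarrow> j \<in> descendants v i"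
proof
  have "length u \<le> k \<and> k - length u \<in> descendants v i" if "k \<in> descendants (u @ v) (i + length u)" for k
    using that unfolding descendants_def mem_Collect_eq
  proof (induction rule: rtranclp_induct)
    case (step k k')
    then have "depends v (k - length u) (k' - length u)"
      by (auto simp: depends_def nth_append)
    then show ?case
      using step by (auto simp: depends_def intro: rtranclp.rtrancl_into_rtrancl)
  qed simp
  then show "j + length u \<in> descendants (u @ v) (i + length u) \<Longrightarrow> j \<in> descendants v i"
    by fastforce
next
  assume "j \<in> descendants v i"
  then show "j + length u \<in> descendants (u @ v) (i + length u)"
    unfolding descendants_def mem_Collect_eq
  proof (induction rule: rtranclp_induct)
    case (step k k')
    then have "depends (u @ v) (k + length u) (k' + length u)"
      by (auto simp: depends_def nth_append)
    then show ?case
      using step by (auto intro: rtranclp.rtrancl_into_rtrancl)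
  qed simp
qed

lemma descendants_append_prefix:
  assumes "j < length u"
  shows "j \<in> descendants (u @ v) i \<longleftrightarrow> j \<in> descendants u i"
proof
  have "k < length u \<longrightarrow> k \<in> descendants u i" if "k \<in> descendants (u @ v) i" for k
    using that unfolding descendants_def mem_Collect_eq
  proof (induction rule: rtranclp_induct)
    case (step k k')
    then show ?case
      by (auto simp: depends_def nth_append intro: rtranclp.rtrancl_into_rtrancl)
  qed simp
  then show "j \<in> descendants (u @ v) i \<Longrightarrow> j \<in> descendants u i"
    using assms by blast
next
  assume "j \<in> descendants u i"
  then show "j \<in> descendants (u @ v) i"
    unfolding descendants_def mem_Collect_eq
  proof (induction rule: rtranclp_induct)
    case (step k k')
    then have "depends (u @ v) k k'"
      by (auto simp: depends_def nth_append)
    then show ?case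
      using step by (auto intro: rtranclp.rtrancl_into_rtrancl)
  qed simp
qed

lemma geq_nths_split:
  assumes "\<And>i j. i \<in> D \<Longrightarrow> depends w i j \<Longrightarrow> j \<in> D"
  shows "geq E (nths w X) (nths w (X - D) @ nths w (X \<inter> D))"
  using assms
proof (induction w arbitrary: X D)
  case Nil
  show ?case by simp
next
  case (Cons x w)
  let ?X = "{j. Suc j \<in> X}" and ?D = "{j. Suc j \<in> D}"
  have "depends w i j \<longleftrightarrow> depends (x # w) (Suc i) (Suc j)" for i j
    by (simp add: depends_def)
  then have IH: "geq E (nths w ?X) (nths w (?X - ?D) @ nths w (?X \<inter> ?D))"
    using Cons.prems by (intro Cons.IH) auto
  have X: "nths (x # w) X = (if 0 \<in> X then [x] else []) @ nths w ?X"
    by (rule nths_Cons)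
  have X_D: "nths (x # w) (X - D) = (if 0 \<in> X \<and> 0 \<notin> D then [x] else []) @ nths w (?X - ?D)"
    using nths_Cons[of x w "X - D"] by (simp add: set_diff_eq)
  have X_D': "nths (x # w) (X \<inter> D) = (if 0 \<in> X \<and> 0 \<in> D then [x] else []) @ nths w (?X \<inter> ?D)"
    using nths_Cons[of x w "X \<inter> D"] by (simp add: Int_def)
  show ?case
  proof (cases "0 \<in> X \<inter> D")
    case False
    then show ?thesis
      unfolding X X_D X_D' using IH geq_Cons by auto
  next
    case True
    have "\<forall>z\<in>set (nths w (?X - ?D)). \<not> E (fst z) (fst x)"
    proof
      fix z
      assume "z \<in> set (nths w (?X - ?D))"
      then obtain j where j: "j < length w" "Suc j \<in> X" "Suc j \<notin> D" "z = w ! j"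
        by (auto simp: set_nths)
      then have "\<not> depends (x # w) 0 (Suc j)"
        using Cons.prems True by blast
      then show "\<not> E (fst z) (fst x)"
        using j not_interacts_commute[of x z] by (simp add: depends_def)
    qed
    then have "geq E (x # nths w (?X - ?D) @ nths w (?X \<inter> ?D)) (nths w (?X - ?D) @ x # nths w (?X \<inter> ?D))"
      using geq_move_left[of _ x "[]"] geq_sym by simp
    then show ?thesis
      unfolding X X_D X_D' using True geq_Cons[OF IH, of x] by (auto intro: geq_trans)
  qed
qed

lemma geq_nths_descendants_split:
  "geq E (nths w X) (nths w (X - descendants w i) @ nths w (X \<inter> descendants w i))"
  by (rule geq_nths_split) (rule descendants_step)

lemma depends_pow_word:
  assumes "c * length r + t < c' * length r + t'" and "c' < n" and "t < length r" and "t' < length r"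
    and "interacts (fst (r ! t)) (r ! t')"
  shows "depends (pow_word r n) (c * length r + t) (c' * length r + t')"
proof -
  have "c \<le> c'"
  proof (rule ccontr)
    assume "\<not> c \<le> c'"
    then have "Suc c' * length r \<le> c * length r"
      by (intro mult_le_mono1) simp
    then show False
      using assms(1,4) by simp
  qed
  have "c' * length r + t' < Suc c' * length r"
    using assms(4) by simp
  also have "\<dots> \<le> n * length r"
    using assms(2) by (intro mult_le_mono1) simp
  moreover have "pow_word r n ! (c * length r + t) = r ! t"
    using assms(2,3) \<open>c \<le> c'\<close> by (simp add: nth_pow_word)
  moreover have "pow_word r n ! (c' * length r + t') = r ! t'"
    using assms(2,4) by (simp add: nth_pow_word)
  ultimately show ?thesis
    using assms(1,5) by (simp add: depends_def)
qed

lemma last_block_descendants: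
  assumes conn: "connected_span E (fst ` set r)" and card: "card (fst ` set r) \<le> Suc K"
    and q: "q < length r" and first: "\<And>t. t < q \<Longrightarrow> fst (r ! t) \<noteq> fst (r ! q)"
    and t: "t < length r"
  shows "K * length r + t \<in> descendants (pow_word r (Suc K)) q"
proof -
  let ?L = "length r" and ?W = "pow_word r (Suc K)"
  define H where "H c = {v \<in> fst ` set r. \<forall>t<?L. fst (r ! t) = v \<longrightarrow> c * ?L + t \<in> descendants ?W q}"
    for c
  have "H K = fst ` set r"
  proof (rule connected_span_exhausted[OF conn _ card])
    have "t \<in> descendants ?W q" if "t < ?L" and "fst (r ! t) = fst (r ! q)" for t
    proof (cases "t = q")
      case False
      then have "q < t"
        using first[of t] that by (cases "t < q") auto
      then have "depends ?W (0 * ?L + q) (0 * ?L + t)"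
        using that q by (intro depends_pow_word) (auto simp: interacts_def)
      then show ?thesis
        using descendants_step[OF descendants_self] by simp
    qed simp
    then have "fst (r ! q) \<in> H 0"
      using q by (auto simp: H_def)
    then show "H 0 \<noteq> {}"
      by blast
  next
    fix c
    assume "c < K"
    show "H c \<subseteq> H (Suc c)"
    proof
      fix v
      assume v: "v \<in> H c"
      have "depends ?W (c * ?L + t) (Suc c * ?L + t)" if "t < ?L" for t
        using that \<open>c < K\<close> by (intro depends_pow_word) auto
      then show "v \<in> H (Suc c)"
        using v descendants_step by (auto simp: H_def)
    qed
    fix v v'
    assume v: "v \<in> H c" and v': "v' \<in> fst ` set r" and "E v v'"
    obtain t0 where t0: "t0 < ?L" "fst (r ! t0) = v"
      using v by (auto simp: H_def in_set_conv_nth)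
    have "depends ?W (c * ?L + t0) (Suc c * ?L + t)" if "t < ?L" "fst (r ! t) = v'" for t
      using that t0 \<open>c < K\<close> \<open>E v v'\<close> by (intro depends_pow_word) (auto simp: interacts_def)
    then show "v' \<in> H (Suc c)"
      using v v' t0 descendants_step by (auto simp: H_def)
  qed (auto simp: H_def)
  then show ?thesis
    using t by (auto simp: H_def)
qed

lemma descendants_copy:
  assumes "q < length r" and "i < length (pow_word r n)"
    and "i \<in> descendants (pow_word r n) (q + length r)"
  shows "i \<in> descendants (pow_word r n) q"
proof -
  have "q + length r < n * length r"
    using assms(2,3) descendants_ge[OF assms(3)] by (cases "i = q + length r") auto
  then have "1 < n"
    by (cases n) (auto intro: gr0I)
  then have "depends (pow_word r n) (0 * length r + q) (1 * length r + q)"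
    using assms(1) by (intro depends_pow_word) auto
  then have "q + length r \<in> descendants (pow_word r n) q"
    using descendants_step[OF descendants_self] by (simp add: add.commute)
  then show ?thesis
    using assms(3) descendants_trans by blast
qed

lemma nths_descendants_append_shift:
  "nths (u @ v) (descendants (u @ v) (i + length u)) = nths v (descendants v i)"
  "nths (u @ v) (- descendants (u @ v) (i + length u)) = u @ nths v (- descendants v i)"
proof -
  let ?D = "descendants (u @ v) (i + length u)"
  have "j \<notin> ?D" if "j < length u" for j
    using that descendants_ge by fastforce
  then have "nths u ?D = []" and "nths u (- ?D) = u"
    by (auto intro: nths_eq_Nil nths_all)
  moreover have "j + length u \<in> ?D \<longleftrightarrow> j \<in> descendants v i" for j
    by (rule descendants_append_shift)
  ultimately show "nths (u @ v) ?D = nths v (descendants v i)"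
    and "nths (u @ v) (- ?D) = u @ nths v (- descendants v i)"
    by (simp_all add: nths_append Compl_eq)
qed

lemma nths_compl_descendants_append:
  assumes "\<And>j. j < length v \<Longrightarrow> j + length u \<in> descendants (u @ v) i"
  shows "nths (u @ v) (- descendants (u @ v) i) = nths u (- descendants u i)"
proof -
  have "nths v {j. j + length u \<in> - descendants (u @ v) i} = []"
    using assms by (intro nths_eq_Nil) simp
  moreover have "nths u (- descendants (u @ v) i) = nths u (- descendants u i)"
    by (rule nths_cong) (simp add: descendants_append_prefix)
  ultimately show ?thesis
    by (simp add: nths_append)
qed

lemma pow_word_descendants_decomposition:
  assumes q: "q < length r"
    and last: "\<And>t. t < length r \<Longrightarrow> K * length r + t \<in> descendants (pow_word r (Suc K)) q"
  defines "a \<equiv> nths (pow_word r K) (- descendants (pow_word r K) q)"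
    and "b \<equiv> nths (pow_word r K) (descendants (pow_word r K) q)"
    and "p \<equiv> nths (pow_word r (Suc K))
      (descendants (pow_word r (Suc K)) q - descendants (pow_word r (Suc K)) (q + length r))"
  shows "geq E (pow_word r K) (a @ b)" and "length (pow_word r K) = length a + length b"
    and "geq E (pow_word r (Suc K)) (a @ p @ b)"
    and "length (pow_word r (Suc K)) = length a + length p + length b"
    and "geq E (pow_word r (Suc K)) (r @ a @ b)"
proof -
  let ?L = "length r" and ?W = "pow_word r (Suc K)" and ?RK = "pow_word r K"
  let ?D = "descendants ?W q" and ?D' = "descendants ?W (q + ?L)"
  have W_r: "?W = r @ ?RK"
    by (rule pow_word_Suc)
  have W_l: "?W = ?RK @ r"
    by (rule pow_word_Suc_right)
  have [simp]: "nths xs UNIV = xs" for xs :: "'v word"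
    by (simp add: nths_all)
  show "geq E ?RK (a @ b)"
    using geq_nths_descendants_split[of ?RK UNIV q] by (simp add: a_def b_def Compl_eq_Diff_UNIV)
  show len_RK: "length ?RK = length a + length b"
    using length_nths_split[of ?RK UNIV "descendants ?RK q"]
    by (simp add: a_def b_def Compl_eq_Diff_UNIV)
  have a: "nths ?W (- ?D) = a"
    unfolding a_def W_l using last by (intro nths_compl_descendants_append) (simp add: W_l add.commute)
  have b: "nths ?W ?D' = b" and r_a: "nths ?W (- ?D') = r @ a"
    using nths_descendants_append_shift[of r ?RK q] by (simp_all add: W_r add.commute a_def b_def)
  have "nths ?W (?D \<inter> ?D') = nths ?W ?D'"
    by (rule nths_cong) (use descendants_copy[OF q] in blast)
  then have p_b: "nths ?W (?D \<inter> ?D') = b"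
    using b by simp
  have "geq E ?W (nths ?W (- ?D) @ nths ?W ?D)"
    using geq_nths_descendants_split[of ?W UNIV q] by (simp add: Compl_eq_Diff_UNIV)
  also have "geq E \<dots> (a @ p @ b)"
    using geq_nths_descendants_split[of ?W ?D "q + ?L"] a p_b by (simp add: p_def geq_append)
  finally show "geq E ?W (a @ p @ b)" .
  show "length ?W = length a + length p + length b"
    using length_nths_split[of ?W UNIV ?D] length_nths_split[of ?W ?D ?D'] a p_b
    by (simp add: p_def Compl_eq_Diff_UNIV)
  show "geq E ?W (r @ a @ b)"
    using geq_nths_descendants_split[of ?W UNIV "q + ?L"] b r_a by (simp add: Compl_eq_Diff_UNIV)
qed

text \<open>Every letter of \<open>p\<close> other than the one at \<open>q\<close> depends on an earlier letter of \<open>p\<close>,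
  so only the letter at \<open>q\<close> can be moved to the front.\<close>

lemma start_gens_nths_descendants:
  assumes "reduced (nths w (descendants w q - descendants w q'))" and "q < q'" and "q < length w"
  shows "start_gens E (nths w (descendants w q - descendants w q')) = {fst (w ! q)}"
proof -
  let ?P = "descendants w q - descendants w q'"
  have q_P: "q \<in> ?P"
    using assms(2) descendants_ge by fastforce
  have "v = fst (w ! q)" if v: "v \<in> start_gens E (nths w ?P)" for v
  proof -
    obtain u y u' where p: "nths w ?P = u @ y # u'" and y: "fst y = v"
      and u: "\<forall>z\<in>set u. \<not> interacts v z"
      using v start_gens_reduced[OF assms(1)] by blast
    obtain s where s: "s \<in> ?P" "w ! s = y" and before_s: "\<forall>j\<in>?P. j < s \<longrightarrow> w ! j \<in> set u"
      using nths_eq_append_Cons[OF p] by blast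
    show ?thesis
    proof (rule ccontr)
      assume "v \<noteq> fst (w ! q)"
      then have "s \<noteq> q"
        using s(2) y by blast
      then obtain k where k: "k \<in> descendants w q" and dep: "depends w k s"
        using descendants_last_step[of s w q] s(1) by blast
      then have "k \<notin> descendants w q'" and "k < s"
        using s(1) descendants_step[of k w q' s] by (auto simp: depends_def)
      then have "\<not> interacts v (w ! k)"
        using k before_s u by blast
      moreover have "interacts (fst (w ! k)) (w ! s)"
        using dep by (simp add: depends_def)
      ultimately show False
        using s(2) y E_sym[of "fst (w ! k)" v] by (auto simp: interacts_def)
    qed
  qed
  moreover have "fst (w ! q) \<in> start_gens E (nths w ?P)"
  proof -
    have "\<And>j. j \<in> ?P \<Longrightarrow> q \<le> j"
      using descendants_ge by blast
    then obtain rest where "nths w ?P = w ! q # rest"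
      using nths_eq_Cons_least[OF q_P assms(3)] by blast
    then show ?thesis
      unfolding start_gens_reduced[OF assms(1)]
      by (intro exI[of _ "[]"] exI[of _ "w ! q"] exI[of _ rest]) simp
  qed
  ultimately show ?thesis
    by blast
qed

lemma conical_conjugate_decomposition:
  assumes r: "reduced r" and cyclic: "cyclically_reduced E r"
    and conn: "connected_span E (fst ` set r)" and card: "card (fst ` set r) \<le> Suc K"
    and v0: "v0 \<in> fst ` set r"
  obtains p a b where "conical E v0 p" and "geq E (r @ a) (a @ p)" and "geq E (p @ b) (b @ r)"
    and "geq E (pow_word r K) (a @ b)" and "reduced a" and "reduced p" and "reduced b"
    and "length p = length r" and "length a + length b = K * length r"
proof -
  let ?L = "length r" and ?W = "pow_word r (Suc K)" and ?RK = "pow_word r K"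
  obtain q where q: "q < ?L" "fst (r ! q) = v0" and first: "\<And>t. t < q \<Longrightarrow> fst (r ! t) \<noteq> v0"
    using first_occurrence[OF v0] by blast
  define a where "a = nths ?RK (- descendants ?RK q)"
  define b where "b = nths ?RK (descendants ?RK q)"
  define p where "p = nths ?W (descendants ?W q - descendants ?W (q + ?L))"
  have last: "K * ?L + t \<in> descendants ?W q" if "t < ?L" for t
    using last_block_descendants[OF conn card q(1) first[folded q(2)] that] .
  note decomposition = pow_word_descendants_decomposition[OF q(1) last, folded a_def b_def p_def]
  have W_apb: "geq E ?W (a @ p @ b)" and W_rab: "geq E ?W (r @ a @ b)"
    using decomposition(3,5) by simp_all
  have "reduced (a @ p @ b)"
    using reduced_if_geq_same_length[OF reduced_pow_word[OF r cyclic] W_apb] decomposition(4) by simp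
  then have "reduced a" "reduced p" "reduced b"
    using reduced_appendD by blast+
  moreover have "geq E (r @ a) (a @ p)"
  proof -
    have "geq E ((r @ a) @ b) ((a @ p) @ b)"
      using geq_sym[OF W_rab] W_apb by (simp add: geq_trans)
    then show ?thesis
      by (rule geq_cancel_right)
  qed
  moreover have "geq E (p @ b) (b @ r)"
  proof -
    have "geq E ?W (a @ b @ r)"
      using geq_append[OF decomposition(1) geq_refl[of r]] q by (simp add: pow_word_Suc_right)
    then have "geq E (a @ p @ b) (a @ b @ r)"
      by (rule geq_trans[OF geq_sym[OF W_apb]])
    then show ?thesis
      by (rule geq_cancel_left)
  qed
  moreover have "length p = ?L"
    using decomposition(2,4) q by (simp add: pow_word_Suc)
  moreover have "conical E v0 p"
  proof -
    have "r \<noteq> []" and "q < length ?W" and "?W ! q = r ! q"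
      using q nth_pow_word[of 0 "Suc K" q r] by (auto simp: trans_less_add1)
    then show ?thesis
      using start_gens_nths_descendants[of ?W q "q + ?L", folded p_def] \<open>reduced p\<close> q
      by (simp add: conical_def)
  qed
  ultimately show thesis
    using that decomposition(1,2) q by simp
qed

lemma conical_conjugate_powers:
  assumes "non_split E g" and "cyclically_reduced E g" and "v0 \<in> supp E g"
    and "card (supp E g) \<le> Suc K"
  obtains p a b where "conical E v0 p"
    and "geq E g (a @ p @ inv_word a)" and "geq E g (inv_word b @ p @ b)"
    and "\<And>n. K \<le> n \<Longrightarrow> geq E (pow_word g n) (a @ pow_word p (n - K) @ b)"
    and "\<And>n. K \<le> n \<Longrightarrow> wlen E (pow_word g n) = wlen E a + (n - K) * wlen E p + wlen E b"
proof -
  obtain r where r: "reduced r" "geq E g r" "length r = wlen E g"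
    using reduced_word_exists by blast
  obtain p a b where p: "conical E v0 p" and ra_ap: "geq E (r @ a) (a @ p)"
    and pb_br: "geq E (p @ b) (b @ r)" and rK_ab: "geq E (pow_word r K) (a @ b)"
    and "reduced a" "reduced p" "reduced b"
    and lengths: "length p = length r" "length a + length b = K * length r"
    using conical_conjugate_decomposition[of r K v0] r(1) assms
      supp_eq_letters[OF r(1,2)] cyclically_reduced_cong[OF r(2)] by (auto simp: non_split_def)
  then have wlens: "wlen E a = length a" "wlen E p = length r" "wlen E b = length b"
    by (simp_all add: reduced_iff_geodesic)
  have "geq E (pow_word g n) (a @ pow_word p (n - K) @ b)" if "K \<le> n" for n
    using geq_pow_word[OF r(2)] geq_pow_word_conjugate_split[OF ra_ap rK_ab that] by (rule geq_trans)
  moreover have "wlen E (pow_word g n) = wlen E a + (n - K) * wlen E p + wlen E b" if "K \<le> n" for n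
  proof -
    have "n * length r = (n - K) * length r + K * length r"
      using that by (simp flip: add_mult_distrib)
    then show ?thesis
      using wlen_pow_word[OF assms(2)] wlens lengths r(3) by simp
  qed
  moreover have "geq E g (a @ p @ inv_word a)" and "geq E g (inv_word b @ p @ b)"
    using r(2) geq_conjugate_right[OF ra_ap] geq_conjugate_left[OF pb_br] by (auto intro: geq_trans)
  ultimately show thesis
    using that p by blast
qed

end

theorem proposition2p4:
  fixes E :: "'v::finite \<Rightarrow> 'v \<Rightarrow> bool" and g :: "'v word" and v0 :: 'v
  assumes "\<And>x y. E x y \<Longrightarrow> E y x"
    and "\<And>x. \<not> E x x"
    and "non_split E g"
    and "cyclically_reduced E g"
    and "v0 \<in> supp E g"
  shows "\<exists>p a b k. conical E v0 p
     \<and> geq E g (a @ p @ inv_word a)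
     \<and> geq E g (inv_word b @ p @ b)
     \<and> k \<le> CARD('v) - 1
     \<and> geq E (pow_word g k) (a @ b)
     \<and> wlen E (pow_word g k) = wlen E a + wlen E b
     \<and> (\<forall>n\<ge>CARD('v). geq E (pow_word g n) (a @ pow_word p (n - k) @ b)
          \<and> wlen E (pow_word g n) = wlen E a + (n - k) * wlen E p + wlen E b)"
proof -
  interpret raag E
    using assms(1) by unfold_locales
  have "card (supp E g) \<le> Suc (CARD('v) - 1)"
    by (simp add: card_mono)
  then obtain p a b where "conical E v0 p"
    and "geq E g (a @ p @ inv_word a)" and "geq E g (inv_word b @ p @ b)"
    and powers: "\<And>n. CARD('v) - 1 \<le> n \<Longrightarrow>
      geq E (pow_word g n) (a @ pow_word p (n - (CARD('v) - 1)) @ b)"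
    and wlen_powers: "\<And>n. CARD('v) - 1 \<le> n \<Longrightarrow>
      wlen E (pow_word g n) = wlen E a + (n - (CARD('v) - 1)) * wlen E p + wlen E b"
    using conical_conjugate_powers assms(3-5) by blast
  then show ?thesis
    using powers[of "CARD('v) - 1"] wlen_powers[of "CARD('v) - 1"]
    by (intro exI[of _ p] exI[of _ a] exI[of _ b] exI[of _ "CARD('v) - 1"]) simp
qed

end
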